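(* Consider the real NEP $\mathcal{G}_{\rm siso}$. Then: (a) $\mathbf{p}$ is a NE of $\mathcal{G}_{\rm siso}$ iff it solves VI$(\mathcal{P}^{\rm siso},\mathbf{G})$, i.e. $\mathbf{p}\in\mathcal{P}^{\rm siso}$ and $(\mathbf{q}-\mathbf{p})^T\mathbf{G}(\mathbf{p})\ge0$ for all $\mathbf{q}\in\mathcal{P}^{\rm siso}$; and this solution set is nonempty and compact; (b) if $\mathbf{JG}_{\rm low}$ is positive semidefinite (resp. positive definite), then $\mathbf{G}$ is monotone (resp. strongly monotone) on $\mathcal{P}^{\rm siso}$; (c) if $\boldsymbol\Upsilon_{\mathbf{G}}$ is a P-matrix (resp. positive definite), then $\mathbf{G}$ is a uniformly P function (resp. strongly monotone) on $\mathcal{P}^{\rm siso}$, and $\mathcal{G}_{\rm siso}$ has a unique NE.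
   Context: There are $I$ users and $N$ subcarriers. Data: complex channel gains $H_{ij}(k)$ with $H_{ii}(k)\ne0$; noise powers $\sigma_i^2(k)>0$; budgets $P_i>0$; masks $\mathbf{p}_i^{\max}=(p_i^{\max}(k))_{k}\ge\mathbf{0}$; vectors $\mathbf{w}_i(k),\boldsymbol\alpha_i\in\mathbb{R}^m_+$. User $i$'s feasible set: $\mathcal{P}_i^{\rm siso}=\{\mathbf{p}_i\in\mathbb{R}^N:\sum_kp_i(k)\le P_i,\ \mathbf{0}\le\mathbf{p}_i\le\mathbf{p}_i^{\max},\ \sum_k\mathbf{w}_i(k)p_i(k)\le\boldsymbol\alpha_i\}$, $\mathcal{P}^{\rm siso}=\prod_i\mathcal{P}_i^{\rm siso}$. Rate $r_i(\mathbf{p}_i,\mathbf{p}_{-i})=\sum_{k=1}^N\log\big(1+\frac{|H_{ii}(k)|^2p_i(k)}{\sigma_i^2(k)+\sum_{j\ne i}|H_{ij}(k)|^2p_j(k)}\big)$. $\mathcal{G}_{\rm siso}$: each user $i$ maximizes $r_i(\mathbf{p}_i,\mathbf{p}_{-i})$ over $\mathbf{p}_i\in\mathcal{P}_i^{\rm siso}$; a NE is a feasible profile where no user can increase its rate unilaterally. $\mathbf{G}=(\mathbf{G}_i)_i$, $\mathbf{G}_i(\mathbf{p})=-\nabla_{\mathbf{p}_i}r_i(\mathbf{p})=\big(-\frac{|H_{ii}(k)|^2}{\sigma_i^2(k)+\sum_{j}|H_{ij}(k)|^2p_j(k)}\big)_{k=1}^N$. Let $\mathsf{innr}_{ij}(k)=\frac{\sigma_j^2(k)+\sum_r|H_{jr}(k)|^2p_r^{\max}(k)}{\sigma_i^2(k)}$.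 $\mathbf{JG}_{\rm low}$ is block diagonal with $N$ blocks $\mathbf{JG}_{\rm low}(k)\in\mathbb{R}^{I\times I}$, $[\mathbf{JG}_{\rm low}(k)]_{ii}=1$, $[\mathbf{JG}_{\rm low}(k)]_{ij}=-\frac{|H_{ij}(k)|^2}{|H_{jj}(k)|^2}\mathsf{innr}_{ij}(k)$ ($i\ne j$). $\boldsymbol\Upsilon_{\mathbf{G}}\in\mathbb{R}^{I\times I}$: $[\boldsymbol\Upsilon_{\mathbf{G}}]_{ii}=1$, $[\boldsymbol\Upsilon_{\mathbf{G}}]_{ij}=-\max_{1\le k\le N}\frac{|H_{ij}(k)|^2}{|H_{jj}(k)|^2}\mathsf{innr}_{ij}(k)$ ($i\ne j$). Monotone: $(\mathbf{p}-\mathbf{q})^T(\mathbf{G}(\mathbf{p})-\mathbf{G}(\mathbf{q}))\ge0$; strongly monotone: $\ge c\|\mathbf{p}-\mathbf{q}\|^2$, $c>0$; uniformly P: $\max_i(\mathbf{p}_i-\mathbf{q}_i)^T(\mathbf{G}_i(\mathbf{p})-\mathbf{G}_i(\mathbf{q}))\ge c\|\mathbf{p}-\mathbf{q}\|^2$, $c>0$. P-matrix: all principal minors positive. *)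

theory Defs
  imports "HOL-Analysis.Analysis"
begin

text \<open>Users are indexed by a finite type 'i, subcarriers by a finite type 'k,
  the extra linear constraints by a finite type 'm.  A power profile is
  p :: real^'k^'i, with p$i$k the power of user i on subcarrier k.
  H i j k is the complex channel gain, nz i k the noise power,
  Pt i the budget, pm i k the mask, w i k l and al i l the l-th components of
  the vectors w_i(k) and alpha_i.\<close>

definition user_set ::
  "real \<Rightarrow> ('k::finite \<Rightarrow> real) \<Rightarrow> ('k \<Rightarrow> 'm \<Rightarrow> real) \<Rightarrow> ('m \<Rightarrow> real) \<Rightarrow> (real^'k) set" where
  "user_set Pt pm w al =
     {x. (\<Sum>k\<in>UNIV. x$k) \<le> Pt \<and> (\<forall>k. 0 \<le> x$k \<and> x$k \<le> pm k)
         \<and> (\<forall>l. (\<Sum>k\<in>UNIV. w k l * x$k) \<le> al l)}"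

definition siso_set ::
  "('i::finite \<Rightarrow> real) \<Rightarrow> ('i \<Rightarrow> 'k::finite \<Rightarrow> real) \<Rightarrow> ('i \<Rightarrow> 'k \<Rightarrow> 'm \<Rightarrow> real)
     \<Rightarrow> ('i \<Rightarrow> 'm \<Rightarrow> real) \<Rightarrow> (real^'k^'i) set" where
  "siso_set Pt pm w al = {p. \<forall>i. p$i \<in> user_set (Pt i) (pm i) (w i) (al i)}"

definition rate ::
  "('i::finite \<Rightarrow> 'i \<Rightarrow> 'k::finite \<Rightarrow> complex) \<Rightarrow> ('i \<Rightarrow> 'k \<Rightarrow> real) \<Rightarrow> 'i \<Rightarrow> real^'k^'i \<Rightarrow> real" where
  "rate H nz i p =
     (\<Sum>k\<in>UNIV. ln (1 + (cmod (H i i k))\<^sup>2 * p$i$k /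
        (nz i k + (\<Sum>j\<in>UNIV-{i}. (cmod (H i j k))\<^sup>2 * p$j$k))))"

definition upd_user :: "real^'k^'i \<Rightarrow> 'i \<Rightarrow> real^'k \<Rightarrow> real^'k^'i" where
  "upd_user p i x = (\<chi> j. if j = i then x else p$j)"

definition is_NE ::
  "('i::finite \<Rightarrow> 'i \<Rightarrow> 'k::finite \<Rightarrow> complex) \<Rightarrow> ('i \<Rightarrow> 'k \<Rightarrow> real)
   \<Rightarrow> ('i \<Rightarrow> real) \<Rightarrow> ('i \<Rightarrow> 'k \<Rightarrow> real) \<Rightarrow> ('i \<Rightarrow> 'k \<Rightarrow> 'm \<Rightarrow> real) \<Rightarrow> ('i \<Rightarrow> 'm \<Rightarrow> real)
   \<Rightarrow> real^'k^'i \<Rightarrow> bool" where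
  "is_NE H nz Pt pm w al p \<longleftrightarrow>
     p \<in> siso_set Pt pm w al \<and>
     (\<forall>i. \<forall>x\<in>user_set (Pt i) (pm i) (w i) (al i).
        rate H nz i (upd_user p i x) \<le> rate H nz i p)"

text \<open>The map G = (-grad_{p_i} r_i)_i.\<close>
definition Gmap ::
  "('i::finite \<Rightarrow> 'i \<Rightarrow> 'k::finite \<Rightarrow> complex) \<Rightarrow> ('i \<Rightarrow> 'k \<Rightarrow> real) \<Rightarrow> real^'k^'i \<Rightarrow> real^'k^'i" where
  "Gmap H nz p = (\<chi> i k. - (cmod (H i i k))\<^sup>2 /
       (nz i k + (\<Sum>j\<in>UNIV. (cmod (H i j k))\<^sup>2 * p$j$k)))"

definition solves_VI :: "'a::real_inner set \<Rightarrow> ('a \<Rightarrow> 'a) \<Rightarrow> 'a \<Rightarrow> bool" where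
  "solves_VI S F p \<longleftrightarrow> p \<in> S \<and> (\<forall>q\<in>S. 0 \<le> (q - p) \<bullet> F p)"

definition monotone_map_on :: "'a::real_inner set \<Rightarrow> ('a \<Rightarrow> 'a) \<Rightarrow> bool" where
  "monotone_map_on S F \<longleftrightarrow> (\<forall>p\<in>S. \<forall>q\<in>S. 0 \<le> (p - q) \<bullet> (F p - F q))"

definition strongly_monotone_map_on :: "'a::real_inner set \<Rightarrow> ('a \<Rightarrow> 'a) \<Rightarrow> bool" where
  "strongly_monotone_map_on S F \<longleftrightarrow>
     (\<exists>c>0. \<forall>p\<in>S. \<forall>q\<in>S. c * (norm (p - q))\<^sup>2 \<le> (p - q) \<bullet> (F p - F q))"

definition uniformly_P_on :: "(real^'k^'i::finite) set \<Rightarrow> (real^'k^'i \<Rightarrow> real^'k^'i) \<Rightarrow> bool" where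
  "uniformly_P_on S F \<longleftrightarrow>
     (\<exists>c>0. \<forall>p\<in>S. \<forall>q\<in>S.
        c * (norm (p - q))\<^sup>2 \<le> (MAX i. (p$i - q$i) \<bullet> (F p $ i - F q $ i)))"

definition psd_mat :: "real^'n^'n \<Rightarrow> bool" where
  "psd_mat A \<longleftrightarrow> (\<forall>x. 0 \<le> x \<bullet> (A *v x))"

definition pd_mat :: "real^'n^'n \<Rightarrow> bool" where
  "pd_mat A \<longleftrightarrow> (\<forall>x. x \<noteq> 0 \<longrightarrow> 0 < x \<bullet> (A *v x))"

definition principal_minor :: "real^'n^'n \<Rightarrow> 'n set \<Rightarrow> real" where
  "principal_minor A S = (\<Sum>q | q permutes S. of_int (sign q) * (\<Prod>i\<in>S. A$i$(q i)))"

definition P_matrix :: "real^'n::finite^'n \<Rightarrow> bool" where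
  "P_matrix A \<longleftrightarrow> (\<forall>S. S \<noteq> {} \<longrightarrow> 0 < principal_minor A S)"

definition innr ::
  "('i::finite \<Rightarrow> 'i \<Rightarrow> 'k \<Rightarrow> complex) \<Rightarrow> ('i \<Rightarrow> 'k \<Rightarrow> real) \<Rightarrow> ('i \<Rightarrow> 'k \<Rightarrow> real)
   \<Rightarrow> 'i \<Rightarrow> 'i \<Rightarrow> 'k \<Rightarrow> real" where
  "innr H nz pm i j k =
     (nz j k + (\<Sum>r\<in>UNIV. (cmod (H j r k))\<^sup>2 * pm r k)) / nz i k"

definition JGlow_blk ::
  "('i::finite \<Rightarrow> 'i \<Rightarrow> 'k \<Rightarrow> complex) \<Rightarrow> ('i \<Rightarrow> 'k \<Rightarrow> real) \<Rightarrow> ('i \<Rightarrow> 'k \<Rightarrow> real)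
   \<Rightarrow> 'k \<Rightarrow> real^'i^'i" where
  "JGlow_blk H nz pm k = (\<chi> i j. if i = j then 1
      else - ((cmod (H i j k))\<^sup>2 / (cmod (H j j k))\<^sup>2) * innr H nz pm i j k)"

definition JGlow ::
  "('i::finite \<Rightarrow> 'i \<Rightarrow> 'k::finite \<Rightarrow> complex) \<Rightarrow> ('i \<Rightarrow> 'k \<Rightarrow> real) \<Rightarrow> ('i \<Rightarrow> 'k \<Rightarrow> real)
   \<Rightarrow> real^('i \<times> 'k)^('i \<times> 'k)" where
  "JGlow H nz pm = (\<chi> a b. if snd a = snd b
      then JGlow_blk H nz pm (snd a) $ fst a $ fst b else 0)"

definition Upsilon_G ::
  "('i::finite \<Rightarrow> 'i \<Rightarrow> 'k::finite \<Rightarrow> complex) \<Rightarrow> ('i \<Rightarrow> 'k \<Rightarrow> real) \<Rightarrow> ('i \<Rightarrow> 'k \<Rightarrow> real)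
   \<Rightarrow> real^'i^'i" where
  "Upsilon_G H nz pm = (\<chi> i j. if i = j then 1
      else - (MAX k. (cmod (H i j k))\<^sup>2 / (cmod (H j j k))\<^sup>2 * innr H nz pm i j k))"

end

theory Submission
  imports Defs
begin

text \<open>
  User i's rate is concave in its own strategy, so p is a Nash equilibrium iff every block p_i
  satisfies the first-order condition on its convex feasible set; one direction uses
  ln u - ln v \<le> (u - v)/v, the other the sign of the derivative along a feasible segment.
  Summed over the users, these conditions are the VI with G = (-grad_{p_i} r_i)_i, which has a
  solution by Brouwer's theorem applied to the projected map p \<mapsto> proj(p - G p).

  For p, q feasible write D_ik(p) for the received power and
  y_ik = |H_ii(k)|^2 (p_ik - q_ik) / sqrt(D_ik(p) D_ik(q)). Then the i-th block of
  (p - q)^T (G p - G q) is at least sum_k sum_j JG_low(k)_ij |y_ik| |y_jk|, because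
  D_jk/D_ik \<le> innr_ij(k). Summing over i gives the quadratic form of JG_low at |y|;
  Cauchy-Schwarz over k turns the same bound into v_i (Upsilon v)_i with v_i = ||y_i||.
  Positive definiteness and the P-property hold uniformly on the unit sphere by compactness,
  and ||y|| dominates a multiple of ||p - q||, which yields strong monotonicity resp. the
  uniform P-property, and with either of them the VI solution is unique.
\<close>

section \<open>P-matrices and positive definite matrices\<close>

lemma principal_minor_empty [simp]: "principal_minor A {} = 1"
  by (simp add: principal_minor_def)

lemma P_matrix_principal_minor_pos: "P_matrix A \<Longrightarrow> 0 < principal_minor A T"
  by (cases "T = {}") (auto simp: P_matrix_def)

lemma permutes_Diff_singleton_iff: "q permutes T - {a} \<longleftrightarrow> q permutes T \<and> q a = a"
proof
  assume q: "q permutes T - {a}"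
  then show "q permutes T \<and> q a = a"
    using permutes_subset[OF q] permutes_not_in[OF q] by auto
next
  assume "q permutes T \<and> q a = a"
  then show "q permutes T - {a}" using permutes_superset[of q T "T - {a}"] by auto
qed

lemma principal_minor_add_diag_entry:
  fixes A :: "real^'n::finite^'n"
  shows "principal_minor (\<chi> i j. A$i$j + (if i = a \<and> j = a then c else 0)) T
     = principal_minor A T + (if a \<in> T then c * principal_minor A (T - {a}) else 0)"
  (is "principal_minor ?B T = _")
proof (cases "a \<in> T")
  case False
  then have "(\<Prod>i\<in>T. ?B $ i $ q i) = (\<Prod>i\<in>T. A $ i $ q i)" for q
    by (intro prod.cong) auto
  then show ?thesis using False by (simp add: principal_minor_def)
next
  case True
  have "(\<Prod>i\<in>T. ?B $ i $ q i)
      = (\<Prod>i\<in>T. A $ i $ q i) + (if q a = a then c * (\<Prod>i\<in>T - {a}. A $ i $ q i) else 0)" for q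
  proof -
    have "(\<Prod>i\<in>T - {a}. ?B $ i $ q i) = (\<Prod>i\<in>T - {a}. A $ i $ q i)"
      by (intro prod.cong) auto
    then show ?thesis
      using True by (simp add: prod.remove[of T a] algebra_simps)
  qed
  then have "principal_minor ?B T = principal_minor A T
      + (\<Sum>q | q permutes T. of_int (sign q) * (if q a = a then c * (\<Prod>i\<in>T - {a}. A $ i $ q i) else 0))"
    by (simp add: principal_minor_def algebra_simps sum.distrib)
  also have "(\<Sum>q | q permutes T. of_int (sign q) * (if q a = a then c * (\<Prod>i\<in>T - {a}. A $ i $ q i) else 0))
      = (\<Sum>q | q permutes T \<and> q a = a. of_int (sign q) * (c * (\<Prod>i\<in>T - {a}. A $ i $ q i)))"
    using finite_permutations[of T]
    by (simp add: sum.inter_filter[symmetric] if_distrib[of "\<lambda>x. _ * x"] cong: if_cong)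
  also have "\<dots> = c * principal_minor A (T - {a})"
    by (simp add: principal_minor_def permutes_Diff_singleton_iff sum_distrib_left algebra_simps)
  finally show ?thesis using True by simp
qed

lemma P_matrix_add_nonneg_diag:
  fixes A :: "real^'n::finite^'n"
  assumes "P_matrix A" and "\<And>i. 0 \<le> d i"
  shows "P_matrix (\<chi> i j. A$i$j + (if i = j then d i else 0))"
proof -
  have "\<forall>T. 0 < principal_minor (\<chi> i j. A$i$j + (if i = j \<and> i \<in> F then d i else 0)) T"
    if "finite F" for F
    using that
  proof (induction F rule: finite_induct)
    case empty
    then show ?case using P_matrix_principal_minor_pos[OF assms(1)] by (simp add: vec_eq_iff)
  next
    case (insert a F)
    let ?B = "\<chi> i j. A$i$j + (if i = j \<and> i \<in> F then d i else 0)"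
    have diag_insert: "(\<chi> i j. A$i$j + (if i = j \<and> i \<in> insert a F then d i else 0))
        = (\<chi> i j. ?B$i$j + (if i = a \<and> j = a then d a else 0))"
      using insert.hyps(2) by (auto simp: vec_eq_iff)
    show ?case
    proof
      fix T
      have "0 < principal_minor ?B T" "0 \<le> d a * principal_minor ?B (T - {a})"
        using insert.IH[rule_format, of T] insert.IH[rule_format, of "T - {a}"] assms(2)[of a]
        by (simp_all add: less_imp_le)
      then show "0 < principal_minor (\<chi> i j. A$i$j + (if i = j \<and> i \<in> insert a F then d i else 0)) T"
        unfolding diag_insert principal_minor_add_diag_entry by simp
    qed
  qed
  from this[of UNIV] show ?thesis by (simp add: P_matrix_def)
qed

lemma det_principal_embedding:
  fixes B :: "real^'n::finite^'n"
  shows "det (\<chi> i j. if i \<in> T then if j \<in> T then B$i$j else 0 else if i = j then 1 else 0)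
       = principal_minor B T"
proof -
  let ?M = "(\<chi> i j. if i \<in> T then if j \<in> T then B$i$j else 0 else if i = j then 1 else 0) :: real^'n^'n"
  have "(\<Prod>i\<in>UNIV. ?M $ i $ p i) = (if p permutes T then \<Prod>i\<in>T. B $ i $ p i else 0)"
    if p: "p permutes UNIV" for p
  proof (cases "p permutes T")
    case True
    have "(\<Prod>i\<in>UNIV. ?M $ i $ p i) = (\<Prod>i\<in>T. ?M $ i $ p i)"
      by (rule prod.mono_neutral_right) (auto simp: permutes_not_in[OF True])
    also have "\<dots> = (\<Prod>i\<in>T. B $ i $ p i)"
      by (intro prod.cong) (auto simp: permutes_in_image[OF True])
    finally show ?thesis using True by simp
  next
    case False
    then obtain i where "i \<notin> T" "p i \<noteq> i"
      using permutes_superset[OF p, of T] by auto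
    then have "(\<Prod>i\<in>UNIV. ?M $ i $ p i) = 0"
      by (intro prod_zero) (auto intro!: bexI[of _ i])
    then show ?thesis using False by simp
  qed
  then have "det ?M = (\<Sum>p | p permutes UNIV.
      of_int (sign p) * (if p permutes T then \<Prod>i\<in>T. B $ i $ p i else 0))"
    unfolding det_def by (intro sum.cong refl) (simp only: mem_Collect_eq)
  also have "\<dots> = (\<Sum>p | p permutes UNIV \<and> p permutes T. of_int (sign p) * (\<Prod>i\<in>T. B $ i $ p i))"
    using finite_permutations[of "UNIV :: 'n set"]
    by (simp add: sum.inter_filter[symmetric] if_distrib[of "\<lambda>x. _ * x"] cong: if_cong)
  also have "{p. p permutes UNIV \<and> p permutes T} = {p. p permutes T}"
    using permutes_subset by blast
  finally show ?thesis by (simp add: principal_minor_def)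
qed

lemma homogeneous_quadratic_lower_bound:
  fixes f :: "'a::euclidean_space \<Rightarrow> real"
  assumes cont: "continuous_on (sphere 0 1) f"
    and hom: "\<And>r x. f (r *\<^sub>R x) = r\<^sup>2 * f x"
    and pos: "\<And>x. norm x = 1 \<Longrightarrow> 0 < f x"
  shows "\<exists>c>0. \<forall>x. c * (norm x)\<^sup>2 \<le> f x"
proof -
  obtain u where u: "u \<in> sphere 0 1" "\<And>x. x \<in> sphere 0 1 \<Longrightarrow> f u \<le> f x"
    using continuous_attains_inf[OF compact_sphere _ cont] by auto
  have "f u * (norm x)\<^sup>2 \<le> f x" for x
  proof (cases "x = 0")
    case True
    then show ?thesis using hom[of 0 x] by simp
  next
    case False
    have "f u \<le> f (inverse (norm x) *\<^sub>R x)" using False by (intro u(2)) simp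
    also have "\<dots> = f x / (norm x)\<^sup>2" by (simp add: hom power_inverse divide_inverse_commute)
    finally show ?thesis using False by (simp add: pos_le_divide_eq)
  qed
  moreover have "0 < f u" using u(1) pos by simp
  ultimately show ?thesis by blast
qed

lemma pd_mat_quadratic_lower_bound:
  fixes A :: "real^'n::finite^'n"
  assumes "pd_mat A"
  shows "\<exists>c>0. \<forall>x. c * (norm x)\<^sup>2 \<le> x \<bullet> (A *v x)"
proof (rule homogeneous_quadratic_lower_bound)
  show "continuous_on (sphere 0 1) (\<lambda>x. x \<bullet> (A *v x))"
    by (intro continuous_intros linear_continuous_on matrix_vector_mul_linear)
  show "x \<bullet> (A *v x) > 0" if "norm x = 1" for x
  proof -
    have "x \<noteq> 0" using that by auto
    then show ?thesis using assms by (simp add: pd_mat_def)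
  qed
qed (simp add: matrix_vector_mult_scaleR power2_eq_square)

text \<open>If x_i (Ax)_i \<le> 0 for all i, then x is a null vector of the principal submatrix on the
  support of x of A + D for a nonnegative diagonal D; but that principal minor is positive.\<close>
lemma P_matrix_no_sign_reversal:
  fixes A :: "real^'n::finite^'n"
  assumes P: "P_matrix A" and "x \<noteq> 0"
  shows "\<exists>i. 0 < x$i * (A *v x)$i"
proof (rule ccontr)
  assume "\<nexists>i. 0 < x$i * (A *v x)$i"
  then have reversed: "x$i * (A *v x)$i \<le> 0" for i by (simp add: not_less)
  define T where "T = {i. x$i \<noteq> 0}"
  define d where "d i = (if x$i \<noteq> 0 then - (A *v x)$i / x$i else 0)" for i
  have d_nonneg: "0 \<le> d i" for i
  proof -
    have "- (A *v x)$i / x$i = - (x$i * (A *v x)$i) / (x$i)\<^sup>2" if "x$i \<noteq> 0"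
      using that by (simp add: field_simps power2_eq_square)
    then show ?thesis using reversed[of i] by (simp add: d_def divide_nonpos_nonneg)
  qed
  define B where "B = (\<chi> i j. A$i$j + (if i = j then d i else 0))"
  define M :: "real^'n^'n" where
    "M = (\<chi> i j. if i \<in> T then if j \<in> T then B$i$j else 0 else if i = j then 1 else 0)"
  have "(M *v x)$i = 0" for i
  proof (cases "i \<in> T")
    case False
    then have "(M *v x)$i = x$i"
      by (simp add: M_def matrix_vector_mult_def if_distrib[of "\<lambda>y. y * _"] cong: if_cong)
    then show ?thesis using False by (simp add: T_def)
  next
    case True
    have "(M *v x)$i = (\<Sum>j\<in>UNIV. B$i$j * x$j)"
      unfolding matrix_vector_mult_def vec_lambda_beta using True
      by (intro sum.cong refl) (auto simp: M_def T_def)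
    also have "\<dots> = (A *v x)$i + d i * x$i"
      by (simp add: B_def matrix_vector_mult_def distrib_right sum.distrib
          if_distrib[of "\<lambda>y. y * _"] cong: if_cong)
    also have "\<dots> = 0"
      using True by (simp add: d_def T_def)
    finally show ?thesis .
  qed
  then have "M *v x = 0" by (simp add: vec_eq_iff)
  moreover have "det M \<noteq> 0"
    using P_matrix_principal_minor_pos[OF P_matrix_add_nonneg_diag[OF P d_nonneg]]
    by (simp add: M_def B_def det_principal_embedding less_imp_neq[symmetric])
  ultimately show False
    using \<open>x \<noteq> 0\<close> invertible_det_nz matrix_left_invertible_ker invertible_def by metis
qed

lemma P_matrix_uniform_sign_non_reversal:
  fixes A :: "real^'n::finite^'n"
  assumes "P_matrix A"
  shows "\<exists>c>0. \<forall>x. \<exists>i. c * (norm x)\<^sup>2 \<le> x$i * (A *v x)$i"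
proof -
  let ?f = "\<lambda>x. \<Sum>i\<in>UNIV. max 0 (x$i * (A *v x)$i)"
  have "\<exists>c>0. \<forall>x. c * (norm x)\<^sup>2 \<le> ?f x"
  proof (rule homogeneous_quadratic_lower_bound)
    show "continuous_on (sphere 0 1) ?f"
      by (intro continuous_intros linear_continuous_on matrix_vector_mul_linear)
    show "?f (r *\<^sub>R x) = r\<^sup>2 * ?f x" for r x
      by (simp add: matrix_vector_mult_scaleR sum_distrib_left max_mult_distrib_left
          power2_eq_square mult_ac)
    show "0 < ?f x" if "norm x = 1" for x
    proof -
      have "x \<noteq> 0" using that by auto
      then obtain i where "0 < x$i * (A *v x)$i"
        using P_matrix_no_sign_reversal[OF assms] by blast
      then show ?thesis by (intro sum_pos2[of UNIV i]) auto
    qed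
  qed
  then obtain c where c: "c > 0" "\<And>x. c * (norm x)\<^sup>2 \<le> ?f x" by blast
  have "\<exists>i. c / CARD('n) * (norm x)\<^sup>2 \<le> x$i * (A *v x)$i" for x
  proof (rule ccontr)
    assume "\<nexists>i. c / CARD('n) * (norm x)\<^sup>2 \<le> x$i * (A *v x)$i"
    moreover from this have "x \<noteq> 0" by auto
    ultimately have "max 0 (x$i * (A *v x)$i) < c / CARD('n) * (norm x)\<^sup>2" for i
      using c(1) by (auto simp: not_le)
    then have "?f x < (\<Sum>i\<in>(UNIV::'n set). c / CARD('n) * (norm x)\<^sup>2)"
      by (intro sum_strict_mono) auto
    also have "\<dots> = c * (norm x)\<^sup>2" by simp
    finally show False using c(2)[of x] by simp
  qed
  then show ?thesis using c(1) by (intro exI[of _ "c / CARD('n)"]) auto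
qed

section \<open>Variational inequalities\<close>

lemma solves_VI_exists:
  fixes F :: "'a::euclidean_space \<Rightarrow> 'a"
  assumes "compact S" "convex S" "S \<noteq> {}" "continuous_on S F"
  shows "\<exists>p. solves_VI S F p"
proof -
  let ?T = "\<lambda>p. closest_point S (p - F p)"
  have "continuous_on S ?T"
    using assms compact_imp_closed
    by (intro continuous_on_compose2[OF continuous_on_closest_point] continuous_intros) auto
  moreover have "?T \<in> S \<rightarrow> S"
    using assms closest_point_in_set compact_imp_closed by blast
  ultimately obtain p where p: "p \<in> S" "?T p = p"
    using brouwer[OF assms(1-3)] by blast
  have "0 \<le> (q - p) \<bullet> F p" if "q \<in> S" for q
    using closest_point_dot[OF assms(2) compact_imp_closed[OF assms(1)] that, of "p - F p"] p(2)
    by (simp add: inner_commute)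
  then show ?thesis using p(1) unfolding solves_VI_def by blast
qed

lemma compact_solves_VI:
  fixes F :: "'a::euclidean_space \<Rightarrow> 'a"
  assumes "compact S" "continuous_on S F"
  shows "compact {p. solves_VI S F p}"
proof -
  have "{p. solves_VI S F p} = S \<inter> (\<Inter>q\<in>S. {p \<in> S. 0 \<le> (q - p) \<bullet> F p})"
    by (auto simp: solves_VI_def)
  also have "compact \<dots>"
    using assms compact_imp_closed
    by (intro compact_Int_closed closed_INT ballI continuous_on_closed_Collect_le continuous_intros) auto
  finally show ?thesis .
qed

lemma solves_VI_strongly_monotone_unique:
  assumes "strongly_monotone_map_on S F" "solves_VI S F p" "solves_VI S F q"
  shows "p = q"
proof -
  obtain c where c: "c > 0" "\<forall>p\<in>S. \<forall>q\<in>S. c * (norm (p - q))\<^sup>2 \<le> (p - q) \<bullet> (F p - F q)"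
    using assms(1) unfolding strongly_monotone_map_on_def by blast
  have "p \<in> S" "q \<in> S" "0 \<le> (q - p) \<bullet> F p" "0 \<le> (p - q) \<bullet> F q"
    using assms(2,3) by (auto simp: solves_VI_def)
  moreover have "(q - p) \<bullet> F p = - ((p - q) \<bullet> F p)" by (simp add: inner_diff_left)
  ultimately have "(p - q) \<bullet> (F p - F q) \<le> 0" by (simp add: inner_diff_right)
  then have "c * (norm (p - q))\<^sup>2 \<le> 0"
    using c(2) \<open>p \<in> S\<close> \<open>q \<in> S\<close> by (meson order_trans)
  then show ?thesis using c(1) by (simp add: mult_le_0_iff)
qed

lemma inner_upd_user: "(upd_user p i x - p) \<bullet> v = (x - p$i) \<bullet> v$i"
proof -
  have "(upd_user p i x - p) \<bullet> v = (\<Sum>j\<in>UNIV. if j = i then (x - p$i) \<bullet> v$i else 0)"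
    unfolding inner_vec_def by (intro sum.cong) (auto simp: upd_user_def)
  then show ?thesis by simp
qed

lemma solves_VI_product_iff:
  fixes F :: "real^'k^'i::finite \<Rightarrow> real^'k^'i"
  shows "solves_VI {p. \<forall>i. p$i \<in> X i} F p \<longleftrightarrow>
    (\<forall>i. p$i \<in> X i) \<and> (\<forall>i. \<forall>x\<in>X i. 0 \<le> (x - p$i) \<bullet> F p $ i)"
proof
  assume VI: "solves_VI {p. \<forall>i. p$i \<in> X i} F p"
  have "0 \<le> (x - p$i) \<bullet> F p $ i" if "x \<in> X i" for i x
  proof -
    have "upd_user p i x \<in> {p. \<forall>i. p$i \<in> X i}"
      using VI that by (auto simp: solves_VI_def upd_user_def)
    then show ?thesis using VI by (auto simp: solves_VI_def inner_upd_user)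
  qed
  then show "(\<forall>i. p$i \<in> X i) \<and> (\<forall>i. \<forall>x\<in>X i. 0 \<le> (x - p$i) \<bullet> F p $ i)"
    using VI by (auto simp: solves_VI_def)
next
  assume blockwise: "(\<forall>i. p$i \<in> X i) \<and> (\<forall>i. \<forall>x\<in>X i. 0 \<le> (x - p$i) \<bullet> F p $ i)"
  have "0 \<le> (q - p) \<bullet> F p" if "\<forall>i. q$i \<in> X i" for q
  proof -
    have "(q - p) \<bullet> F p = (\<Sum>i\<in>UNIV. (q$i - p$i) \<bullet> F p $ i)"
      by (simp add: inner_vec_def)
    also have "0 \<le> \<dots>" using blockwise that by (intro sum_nonneg) auto
    finally show ?thesis .
  qed
  then show "solves_VI {p. \<forall>i. p$i \<in> X i} F p"
    using blockwise by (simp add: solves_VI_def)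
qed

lemma solves_VI_uniformly_P_unique:
  fixes F :: "real^'k^'i::finite \<Rightarrow> real^'k^'i"
  assumes "uniformly_P_on {p. \<forall>i. p$i \<in> X i} F"
    and VI: "solves_VI {p. \<forall>i. p$i \<in> X i} F p" "solves_VI {p. \<forall>i. p$i \<in> X i} F q"
  shows "p = q"
proof -
  obtain c where c: "c > 0" "\<forall>p\<in>{p. \<forall>i. p$i \<in> X i}. \<forall>q\<in>{p. \<forall>i. p$i \<in> X i}.
      c * (norm (p - q))\<^sup>2 \<le> (MAX i. (p$i - q$i) \<bullet> (F p $ i - F q $ i))"
    using assms(1) unfolding uniformly_P_on_def by blast
  have "(p$i - q$i) \<bullet> (F p $ i - F q $ i) \<le> 0" for i
  proof -
    have "0 \<le> (q$i - p$i) \<bullet> F p $ i" "0 \<le> (p$i - q$i) \<bullet> F q $ i"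
      using VI by (auto simp: solves_VI_product_iff)
    then show ?thesis by (simp add: inner_diff_left inner_diff_right)
  qed
  then have "(MAX i. (p$i - q$i) \<bullet> (F p $ i - F q $ i)) \<le> 0"
    by (simp add: Max_le_iff)
  moreover have "c * (norm (p - q))\<^sup>2 \<le> (MAX i. (p$i - q$i) \<bullet> (F p $ i - F q $ i))"
    using c(2) VI by (simp add: solves_VI_def)
  ultimately have "c * (norm (p - q))\<^sup>2 \<le> 0" by linarith
  then show ?thesis using c(1) by (simp add: mult_le_0_iff)
qed

section \<open>The SISO game\<close>

lemma zero_in_user_set:
  "0 \<le> Pt \<Longrightarrow> (\<And>k. 0 \<le> pm k) \<Longrightarrow> (\<And>l. 0 \<le> al l) \<Longrightarrow> 0 \<in> user_set Pt pm w al"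
  by (simp add: user_set_def)

lemma convex_user_set: "convex (user_set Pt pm w al)"
proof (rule convexI)
  fix x y and u v :: real
  assume x: "x \<in> user_set Pt pm w al" and y: "y \<in> user_set Pt pm w al"
    and uv: "0 \<le> u" "0 \<le> v" "u + v = 1"
  have linear_comb: "(\<Sum>k\<in>UNIV. c k * (u *\<^sub>R x + v *\<^sub>R y)$k)
      = u * (\<Sum>k\<in>UNIV. c k * x$k) + v * (\<Sum>k\<in>UNIV. c k * y$k)" for c
    by (simp add: sum.distrib sum_distrib_left algebra_simps)
  from linear_comb[of "\<lambda>_. 1"] linear_comb[of "\<lambda>k. w k l" for l] x y uv
  show "u *\<^sub>R x + v *\<^sub>R y \<in> user_set Pt pm w al"
    by (auto simp: user_set_def intro!: convex_bound_le)
qed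

lemma closed_user_set: "closed (user_set Pt pm w al)"
  unfolding user_set_def
  by (intro closed_Collect_conj closed_Collect_all closed_Collect_le continuous_intros)

lemma user_set_bounds: "x \<in> user_set Pt pm w al \<Longrightarrow> 0 \<le> x$k \<and> x$k \<le> pm k"
  by (simp add: user_set_def)

lemma siso_set_bounds: "p \<in> siso_set Pt pm w al \<Longrightarrow> 0 \<le> p$i$k \<and> p$i$k \<le> pm i k"
  unfolding siso_set_def using user_set_bounds by blast

lemma compact_siso_set: "compact (siso_set Pt pm w al)"
proof -
  have "norm p \<le> norm (\<chi> i k. pm i k)" if "p \<in> siso_set Pt pm w al" for p
  proof (intro norm_le_componentwise_cart)
    fix i k
    from siso_set_bounds[OF that, of i k] show "norm (p$i$k) \<le> norm ((\<chi> i k. pm i k)$i$k)" by simp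
  qed
  then have "bounded (siso_set Pt pm w al)" by (auto simp: bounded_iff)
  moreover have "siso_set Pt pm w al = (\<Inter>i. (\<lambda>p. p$i) -` user_set (Pt i) (pm i) (w i) (al i))"
    by (auto simp: siso_set_def)
  then have "closed (siso_set Pt pm w al)"
    by (auto intro!: closed_INT continuous_closed_vimage closed_user_set continuous_intros)
  ultimately show ?thesis by (simp add: compact_eq_bounded_closed)
qed

lemma convex_siso_set: "convex (siso_set Pt pm w al)"
  unfolding siso_set_def convex_def by (auto intro!: convexD[OF convex_user_set])

locale siso_game =
  fixes H :: "'i::finite \<Rightarrow> 'i \<Rightarrow> 'k::finite \<Rightarrow> complex"
    and nz :: "'i \<Rightarrow> 'k \<Rightarrow> real"
    and Pt :: "'i \<Rightarrow> real"
    and pm :: "'i \<Rightarrow> 'k \<Rightarrow> real"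
    and w :: "'i \<Rightarrow> 'k \<Rightarrow> 'm::finite \<Rightarrow> real"
    and al :: "'i \<Rightarrow> 'm \<Rightarrow> real"
  assumes H_diag: "\<And>i k. H i i k \<noteq> 0"
    and sigma_pos: "\<And>i k. 0 < nz i k"
    and Pt_nonneg: "\<And>i. 0 \<le> Pt i"
    and pm_nonneg: "\<And>i k. 0 \<le> pm i k"
    and al_nonneg: "\<And>i l. 0 \<le> al i l"
begin

abbreviation feasible :: "(real^'k^'i) set" where
  "feasible \<equiv> siso_set Pt pm w al"

abbreviation feasible_user :: "'i \<Rightarrow> (real^'k) set" where
  "feasible_user i \<equiv> user_set (Pt i) (pm i) (w i) (al i)"

definition gain :: "'i \<Rightarrow> 'i \<Rightarrow> 'k \<Rightarrow> real" where
  "gain i j k = (cmod (H i j k))\<^sup>2"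

definition interference :: "real^'k^'i \<Rightarrow> 'i \<Rightarrow> 'k \<Rightarrow> real" where
  "interference p i k = nz i k + (\<Sum>j\<in>UNIV-{i}. gain i j k * p$j$k)"

definition received :: "real^'k^'i \<Rightarrow> 'i \<Rightarrow> 'k \<Rightarrow> real" where
  "received p i k = nz i k + (\<Sum>j\<in>UNIV. gain i j k * p$j$k)"

definition received_max :: "'i \<Rightarrow> 'k \<Rightarrow> real" where
  "received_max i k = nz i k + (\<Sum>j\<in>UNIV. gain i j k * pm j k)"

lemma gain_nonneg: "0 \<le> gain i j k"
  by (simp add: gain_def)

lemma gain_diag_pos: "0 < gain i i k"
  using H_diag by (simp add: gain_def)

lemma feasible_iff: "feasible = {p. \<forall>i. p$i \<in> feasible_user i}"
  by (simp add: siso_set_def)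

lemma zero_feasible: "0 \<in> feasible"
  using Pt_nonneg pm_nonneg al_nonneg by (simp add: siso_set_def zero_in_user_set)

lemma received_split: "received p i k = interference p i k + gain i i k * p$i$k"
  by (simp add: received_def interference_def sum.remove[of UNIV i])

lemma interference_pos:
  assumes "p \<in> feasible" shows "0 < interference p i k"
  unfolding interference_def using siso_set_bounds[OF assms] sigma_pos gain_nonneg
  by (intro add_pos_nonneg sum_nonneg mult_nonneg_nonneg) auto

lemma received_bounds:
  assumes "p \<in> feasible"
  shows "nz i k \<le> received p i k" "received p i k \<le> received_max i k"
  using siso_set_bounds[OF assms] gain_nonneg
  by (auto simp: received_def received_max_def intro!: sum_nonneg sum_mono mult_left_mono)

lemma received_pos: "p \<in> feasible \<Longrightarrow> 0 < received p i k"
  using received_bounds(1) sigma_pos by (meson less_le_trans)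

lemma received_max_pos: "0 < received_max i k"
  using received_bounds(2)[OF zero_feasible] received_pos[OF zero_feasible] by (meson less_le_trans)

lemma Gmap_nth: "Gmap H nz p $ i $ k = - gain i i k / received p i k"
  by (simp add: Gmap_def received_def gain_def)

lemma continuous_on_Gmap: "continuous_on feasible (Gmap H nz)"
proof -
  have "continuous_on feasible (\<lambda>p. \<chi> i k. - gain i i k / received p i k)"
    using received_pos unfolding received_def
    by (intro continuous_intros) (auto simp: less_imp_neq[symmetric])
  moreover have "Gmap H nz = (\<lambda>p. \<chi> i k. - gain i i k / received p i k)"
    by (simp add: fun_eq_iff vec_eq_iff Gmap_nth)
  ultimately show ?thesis by simp
qed

end

section \<open>Nash equilibria as solutions of the variational inequality\<close>

lemma ln_diff_le: "0 < u \<Longrightarrow> 0 < v \<Longrightarrow> ln u - ln v \<le> (u - v) / (v::real)"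
  using ln_le_minus_one[of "u / v"] by (simp add: ln_div diff_divide_distrib)

lemma DERIV_ln_one_plus_segment:
  fixes a b p x :: real
  assumes "0 < b" "0 < b + a * p"
  shows "((\<lambda>t. ln (1 + a * (p + t * (x - p)) / b)) has_real_derivative a * (x - p) / (b + a * p)) (at 0)"
proof -
  have "1 + a * (p + t * (x - p)) / b = (b + a * p + t * (a * (x - p))) / b" for t
    using assms by (simp add: field_simps)
  moreover have "((\<lambda>t. ln ((b + a * p + t * (a * (x - p))) / b))
      has_real_derivative a * (x - p) / (b + a * p)) (at 0)"
    using assms by (auto intro!: derivative_eq_intros)
  ultimately show ?thesis by simp
qed

context siso_game begin

lemma interference_upd_user: "interference (upd_user p i x) i k = interference p i k"
  unfolding interference_def by (intro arg_cong2[where f = "(+)"] sum.cong) (auto simp: upd_user_def)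

lemma rate_upd_user:
  "rate H nz i (upd_user p i x) = (\<Sum>k\<in>UNIV. ln (1 + gain i i k * x$k / interference p i k))"
proof -
  have "rate H nz i (upd_user p i x)
      = (\<Sum>k\<in>UNIV. ln (1 + gain i i k * x$k / interference (upd_user p i x) i k))"
    by (simp add: rate_def gain_def interference_def upd_user_def)
  then show ?thesis by (simp only: interference_upd_user)
qed

lemma upd_user_self: "upd_user p i (p$i) = p"
  by (simp add: upd_user_def vec_eq_iff)

lemma inner_Gmap_nth:
  "(x - p$i) \<bullet> Gmap H nz p $ i = - (\<Sum>k\<in>UNIV. gain i i k * (x$k - p$i$k) / received p i k)"
  by (simp add: inner_vec_def Gmap_nth sum_negf[symmetric] algebra_simps)

lemma solves_VI_imp_NE:
  assumes "solves_VI feasible (Gmap H nz) p"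
  shows "is_NE H nz Pt pm w al p"
proof -
  have p: "p \<in> feasible" using assms by (simp add: solves_VI_def)
  have "rate H nz i (upd_user p i x) \<le> rate H nz i p" if x: "x \<in> feasible_user i" for i x
  proof -
    let ?u = "\<lambda>k. 1 + gain i i k * x$k / interference p i k"
    let ?v = "\<lambda>k. 1 + gain i i k * p$i$k / interference p i k"
    have uv_pos: "0 < ?u k" "0 < ?v k" for k
      using interference_pos[OF p, of i k] gain_nonneg user_set_bounds[OF x, of k]
        siso_set_bounds[OF p, of i k]
      by (auto intro!: add_pos_nonneg)
    have "rate H nz i (upd_user p i x) - rate H nz i p = (\<Sum>k\<in>UNIV. ln (?u k) - ln (?v k))"
      using rate_upd_user[of i p x] rate_upd_user[of i p "p$i"]
      by (simp add: upd_user_self sum_subtractf)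
    also have "\<dots> \<le> (\<Sum>k\<in>UNIV. (?u k - ?v k) / ?v k)"
      using uv_pos by (intro sum_mono ln_diff_le)
    also have "\<dots> = (\<Sum>k\<in>UNIV. gain i i k * (x$k - p$i$k) / received p i k)"
    proof (intro sum.cong refl)
      fix k
      have B: "interference p i k \<noteq> 0" using interference_pos[OF p, of i k] by linarith
      then have "?u k - ?v k = gain i i k * (x$k - p$i$k) / interference p i k"
        "?v k = received p i k / interference p i k"
        by (simp_all add: received_split field_simps)
      then show "(?u k - ?v k) / ?v k = gain i i k * (x$k - p$i$k) / received p i k"
        using B by simp
    qed
    also have "\<dots> \<le> 0"
      using assms x by (auto simp: feasible_iff solves_VI_product_iff inner_Gmap_nth)
    finally show ?thesis by simp
  qed
  then show ?thesis using p by (simp add: is_NE_def)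
qed

text \<open>If the VI failed in direction x, the rate of user i would have positive derivative
  along the feasible segment from p$i towards x.\<close>
lemma NE_imp_solves_VI:
  assumes NE: "is_NE H nz Pt pm w al p"
  shows "solves_VI feasible (Gmap H nz) p"
proof -
  have p: "p \<in> feasible" using NE by (simp add: is_NE_def)
  have "0 \<le> (x - p$i) \<bullet> Gmap H nz p $ i" if x: "x \<in> feasible_user i" for i x
  proof (rule ccontr)
    assume "\<not> ?thesis"
    then have slope_pos: "0 < (\<Sum>k\<in>UNIV. gain i i k * (x$k - p$i$k) / received p i k)"
      by (simp add: inner_Gmap_nth)
    define y where "y t = p$i + t *\<^sub>R (x - p$i)" for t
    define \<phi> where "\<phi> t = rate H nz i (upd_user p i (y t))" for t
    have \<phi>_eq: "\<phi> t = (\<Sum>k\<in>UNIV. ln (1 + gain i i k * (p$i$k + t * (x$k - p$i$k)) / interference p i k))" for t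
      by (simp add: \<phi>_def y_def rate_upd_user)
    have "(\<phi> has_real_derivative (\<Sum>k\<in>UNIV. gain i i k * (x$k - p$i$k) / received p i k)) (at 0)"
      unfolding \<phi>_eq[abs_def]
    proof (intro DERIV_sum)
      fix k
      show "((\<lambda>t. ln (1 + gain i i k * (p$i$k + t * (x$k - p$i$k)) / interference p i k))
          has_real_derivative gain i i k * (x$k - p$i$k) / received p i k) (at 0)"
        unfolding received_split
        using interference_pos[OF p] received_pos[OF p]
        by (intro DERIV_ln_one_plus_segment) (auto simp: received_split)
    qed
    then obtain d where d: "d > 0" "\<And>t. 0 < t \<Longrightarrow> t < d \<Longrightarrow> \<phi> 0 < \<phi> t"
      using DERIV_pos_inc_right[OF _ slope_pos] by force
    define t where "t = min (d / 2) 1"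
    have "p$i \<in> feasible_user i" using p by (simp add: feasible_iff)
    from convexD_alt[OF convex_user_set this x, of t] d(1)
    have "y t \<in> feasible_user i"
      by (simp add: y_def t_def algebra_simps)
    then have "\<phi> t \<le> \<phi> 0"
      using NE by (simp add: is_NE_def \<phi>_def y_def upd_user_self)
    moreover have "\<phi> 0 < \<phi> t" using d by (simp add: t_def)
    ultimately show False by simp
  qed
  then show ?thesis using p by (simp add: feasible_iff solves_VI_product_iff)
qed

lemma NE_iff_solves_VI: "is_NE H nz Pt pm w al p \<longleftrightarrow> solves_VI feasible (Gmap H nz) p"
  using NE_imp_solves_VI solves_VI_imp_NE by blast

lemma ex_solves_VI: "\<exists>p. solves_VI feasible (Gmap H nz) p"
  using compact_siso_set convex_siso_set zero_feasible continuous_on_Gmap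
  by (intro solves_VI_exists) auto

lemma compact_solutions_VI: "compact {p. solves_VI feasible (Gmap H nz) p}"
  using compact_siso_set continuous_on_Gmap by (rule compact_solves_VI)

end

section \<open>Monotonicity of G\<close>

lemma mult_ge_neg_bound:
  fixes m L u v :: real
  assumes "0 \<le> m" "m \<le> L"
  shows "- L * \<bar>u\<bar> * \<bar>v\<bar> \<le> u * v * m"
proof -
  have "- L * \<bar>u\<bar> * \<bar>v\<bar> \<le> - \<bar>u * v\<bar> * m"
    using assms by (simp add: abs_mult mult_left_mono mult.assoc mult.commute[of L])
  also have "\<dots> \<le> u * v * m"
    using assms(1) by (intro mult_right_mono) auto
  finally show ?thesis .
qed

lemma power2_norm_vec: "(norm (x :: real^'n::finite))\<^sup>2 = (\<Sum>i\<in>UNIV. (x$i)\<^sup>2)"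
  unfolding power2_norm_eq_inner by (simp add: inner_vec_def power2_eq_square)

lemma sum_UNIV_prod: "(\<Sum>x\<in>(UNIV::('a::finite \<times> 'b::finite) set). f x) = (\<Sum>a\<in>UNIV. \<Sum>b\<in>UNIV. f (a, b))"
  by (simp add: sum.cartesian_product UNIV_Times_UNIV[symmetric] del: UNIV_Times_UNIV)

lemma JGlow_quadratic_form:
  fixes z :: "'i::finite \<Rightarrow> 'k::finite \<Rightarrow> real"
  defines "Z \<equiv> \<chi> a. z (fst a) (snd a)"
  shows "Z \<bullet> (JGlow H nz pm *v Z)
     = (\<Sum>i\<in>UNIV. \<Sum>k\<in>UNIV. \<Sum>j\<in>UNIV. JGlow_blk H nz pm k $ i $ j * z i k * z j k)"
proof -
  have "(JGlow H nz pm *v Z) $ (i, k) = (\<Sum>j\<in>UNIV. JGlow_blk H nz pm k $ i $ j * z j k)" for i k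
  proof -
    have "(JGlow H nz pm *v Z) $ (i, k)
        = (\<Sum>j\<in>UNIV. \<Sum>l\<in>UNIV. (if l = k then JGlow_blk H nz pm k $ i $ j * z j l else 0))"
      by (simp add: matrix_vector_mult_def sum_UNIV_prod JGlow_def Z_def
          if_distrib[of "\<lambda>x. x * _"] cong: if_cong)
    then show ?thesis by simp
  qed
  then show ?thesis
    by (simp add: inner_vec_def sum_UNIV_prod Z_def sum_distrib_left mult_ac)
qed

context siso_game begin

definition geo_received :: "real^'k^'i \<Rightarrow> real^'k^'i \<Rightarrow> 'i \<Rightarrow> 'k \<Rightarrow> real" where
  "geo_received p q i k = sqrt (received p i k * received q i k)"

definition scaled_diff :: "real^'k^'i \<Rightarrow> real^'k^'i \<Rightarrow> 'i \<Rightarrow> 'k \<Rightarrow> real" where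
  "scaled_diff p q i k = gain i i k * (p$i$k - q$i$k) / geo_received p q i k"

lemma geo_received_bounds:
  assumes "p \<in> feasible" "q \<in> feasible"
  shows "nz i k \<le> geo_received p q i k" "geo_received p q i k \<le> received_max i k"
proof -
  have "nz i k \<le> received p i k" "nz i k \<le> received q i k"
    "received p i k \<le> received_max i k" "received q i k \<le> received_max i k"
    using received_bounds assms by auto
  moreover have "0 \<le> nz i k" using sigma_pos[of i k] by simp
  ultimately have "sqrt (nz i k * nz i k) \<le> geo_received p q i k"
    "geo_received p q i k \<le> sqrt (received_max i k * received_max i k)"
    unfolding geo_received_def by (intro real_sqrt_le_mono mult_mono; linarith)+
  then show "nz i k \<le> geo_received p q i k" "geo_received p q i k \<le> received_max i k"
    using \<open>0 \<le> nz i k\<close> received_max_pos[of i k] by simp_all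
qed

lemma geo_received_pos: "p \<in> feasible \<Longrightarrow> q \<in> feasible \<Longrightarrow> 0 < geo_received p q i k"
  using geo_received_bounds(1) sigma_pos less_le_trans by blast

lemma Gmap_diff_nth:
  assumes "p \<in> feasible" "q \<in> feasible"
  shows "Gmap H nz p $ i $ k - Gmap H nz q $ i $ k
     = gain i i k * (\<Sum>j\<in>UNIV. gain i j k * (p$j$k - q$j$k)) / (geo_received p q i k)\<^sup>2"
proof -
  have "received p i k - received q i k = (\<Sum>j\<in>UNIV. gain i j k * (p$j$k - q$j$k))"
    by (simp add: received_def sum_subtractf[symmetric] right_diff_distrib)
  moreover have "(geo_received p q i k)\<^sup>2 = received p i k * received q i k"
    using received_pos assms by (simp add: geo_received_def less_imp_le)
  moreover have "0 < received p i k" "0 < received q i k" using received_pos assms by auto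
  ultimately show ?thesis by (simp add: Gmap_nth field_simps)
qed

lemma JGlow_blk_off_diag:
  "j \<noteq> i \<Longrightarrow> JGlow_blk H nz pm k $ i $ j = - (gain i j k / gain j j k * (received_max j k / nz i k))"
  by (simp add: JGlow_blk_def innr_def gain_def received_max_def)

text \<open>In scaled differences the (i,j) term carries the factor
  geo_received j / geo_received i \<le> received_max j / nz i, which is innr i j.\<close>
lemma JGlow_blk_subcarrier_bound:
  assumes p: "p \<in> feasible" and q: "q \<in> feasible"
  shows "(\<Sum>j\<in>UNIV. JGlow_blk H nz pm k $ i $ j * \<bar>scaled_diff p q i k\<bar> * \<bar>scaled_diff p q j k\<bar>)
     \<le> (p$i$k - q$i$k) * (Gmap H nz p $ i $ k - Gmap H nz q $ i $ k)"
proof -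
  have "(p$i$k - q$i$k) * (Gmap H nz p $ i $ k - Gmap H nz q $ i $ k)
     = (\<Sum>j\<in>UNIV. (p$i$k - q$i$k) * gain i i k * gain i j k * (p$j$k - q$j$k)
          / (geo_received p q i k)\<^sup>2)"
    by (simp add: Gmap_diff_nth[OF p q] sum_distrib_left sum_divide_distrib mult.assoc)
  also have "\<dots> = (\<Sum>j\<in>UNIV. scaled_diff p q i k * scaled_diff p q j k
          * (gain i j k / gain j j k * (geo_received p q j k / geo_received p q i k)))"
  proof (intro sum.cong refl)
    fix j
    have "gain j j k \<noteq> 0" "geo_received p q i k \<noteq> 0" "geo_received p q j k \<noteq> 0"
      using gain_diag_pos[of j k] geo_received_pos[OF p q] by (auto simp: less_imp_neq[symmetric])
    then show "(p$i$k - q$i$k) * gain i i k * gain i j k * (p$j$k - q$j$k) / (geo_received p q i k)\<^sup>2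
      = scaled_diff p q i k * scaled_diff p q j k
          * (gain i j k / gain j j k * (geo_received p q j k / geo_received p q i k))"
      by (simp add: scaled_diff_def field_simps power2_eq_square)
  qed
  also have "(\<Sum>j\<in>UNIV. JGlow_blk H nz pm k $ i $ j * \<bar>scaled_diff p q i k\<bar> * \<bar>scaled_diff p q j k\<bar>) \<le> \<dots>"
  proof (rule sum_mono)
    fix j
    show "JGlow_blk H nz pm k $ i $ j * \<bar>scaled_diff p q i k\<bar> * \<bar>scaled_diff p q j k\<bar>
      \<le> scaled_diff p q i k * scaled_diff p q j k
          * (gain i j k / gain j j k * (geo_received p q j k / geo_received p q i k))"
    proof (cases "j = i")
      case True
      then show ?thesis
        using gain_diag_pos[of i k] geo_received_pos[OF p q, of i k]
        by (simp add: JGlow_blk_def abs_mult_self_eq)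
    next
      case False
      have "geo_received p q j k / geo_received p q i k \<le> received_max j k / nz i k"
        using geo_received_bounds[OF p q] geo_received_pos[OF p q] sigma_pos received_max_pos
        by (intro frac_le) (auto intro: less_imp_le)
      then have "gain i j k / gain j j k * (geo_received p q j k / geo_received p q i k)
          \<le> gain i j k / gain j j k * (received_max j k / nz i k)"
        using gain_nonneg gain_diag_pos[of j k] by (intro mult_left_mono) auto
      moreover have "0 \<le> gain i j k / gain j j k * (geo_received p q j k / geo_received p q i k)"
        using gain_nonneg[of i j k] gain_diag_pos[of j k] geo_received_pos[OF p q, of i k]
          geo_received_pos[OF p q, of j k]
        by (intro mult_nonneg_nonneg divide_nonneg_pos) auto
      ultimately show ?thesis
        unfolding JGlow_blk_off_diag[OF False] by (rule mult_ge_neg_bound[rotated])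
    qed
  qed
  finally show ?thesis .
qed

lemma JGlow_blk_user_bound:
  assumes "p \<in> feasible" "q \<in> feasible"
  shows "(\<Sum>k\<in>UNIV. \<Sum>j\<in>UNIV. JGlow_blk H nz pm k $ i $ j * \<bar>scaled_diff p q i k\<bar> * \<bar>scaled_diff p q j k\<bar>)
     \<le> (p$i - q$i) \<bullet> (Gmap H nz p $ i - Gmap H nz q $ i)"
  unfolding inner_vec_def using JGlow_blk_subcarrier_bound[OF assms]
  by (simp add: sum_mono)

lemma scaled_diff_lower_bound:
  "\<exists>m>0. \<forall>p\<in>feasible. \<forall>q\<in>feasible. m * (norm (p - q))\<^sup>2 \<le> (\<Sum>i\<in>UNIV. \<Sum>k\<in>UNIV. (scaled_diff p q i k)\<^sup>2)"
proof -
  define m where "m = Min (range (\<lambda>(i, k). (gain i i k / received_max i k)\<^sup>2))"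
  have m_le: "m \<le> (gain i i k / received_max i k)\<^sup>2" for i k
    unfolding m_def by (rule Min_le) auto
  have "m \<in> range (\<lambda>(i, k). (gain i i k / received_max i k)\<^sup>2)"
    unfolding m_def by (intro Min_in) auto
  then have m_pos: "0 < m"
    using gain_diag_pos received_max_pos by (auto simp: less_imp_neq[symmetric])
  have "m * (p$i$k - q$i$k)\<^sup>2 \<le> (scaled_diff p q i k)\<^sup>2"
    if p: "p \<in> feasible" and q: "q \<in> feasible" for p q i k
  proof -
    have "m * (p$i$k - q$i$k)\<^sup>2 \<le> (gain i i k / received_max i k)\<^sup>2 * (p$i$k - q$i$k)\<^sup>2"
      using m_le by (intro mult_right_mono) auto
    also have "\<dots> \<le> (gain i i k / geo_received p q i k)\<^sup>2 * (p$i$k - q$i$k)\<^sup>2"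
      using geo_received_bounds[OF p q] geo_received_pos[OF p q] gain_diag_pos[of i k]
        received_max_pos[of i k]
      by (intro mult_right_mono power_mono frac_le) (auto intro: less_imp_le)
    also have "\<dots> = (scaled_diff p q i k)\<^sup>2"
      by (simp add: scaled_diff_def power_mult_distrib power_divide)
    finally show ?thesis .
  qed
  then have "m * (norm (p - q))\<^sup>2 \<le> (\<Sum>i\<in>UNIV. \<Sum>k\<in>UNIV. (scaled_diff p q i k)\<^sup>2)"
    if "p \<in> feasible" "q \<in> feasible" for p q
    using that
    by (simp add: power2_norm_eq_inner inner_vec_def sum_distrib_left power2_eq_square[symmetric]
        sum_mono)
  then show ?thesis using m_pos by blast
qed

definition scaled_diff_vec :: "real^'k^'i \<Rightarrow> real^'k^'i \<Rightarrow> real^('i \<times> 'k)" where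
  "scaled_diff_vec p q = (\<chi> a. \<bar>scaled_diff p q (fst a) (snd a)\<bar>)"

definition user_scaled_norms :: "real^'k^'i \<Rightarrow> real^'k^'i \<Rightarrow> real^'i" where
  "user_scaled_norms p q = (\<chi> i. norm (\<chi> k. scaled_diff p q i k))"

lemma norm_scaled_diff_row:
  "(norm (\<chi> k. scaled_diff p q i k))\<^sup>2 = (\<Sum>k\<in>UNIV. (scaled_diff p q i k)\<^sup>2)"
  unfolding power2_norm_vec by simp

lemma norm_scaled_diff_vec:
  "(norm (scaled_diff_vec p q))\<^sup>2 = (\<Sum>i\<in>UNIV. \<Sum>k\<in>UNIV. (scaled_diff p q i k)\<^sup>2)"
  unfolding power2_norm_vec by (simp add: sum_UNIV_prod scaled_diff_vec_def)

lemma norm_user_scaled_norms: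
  "(norm (user_scaled_norms p q))\<^sup>2 = (\<Sum>i\<in>UNIV. \<Sum>k\<in>UNIV. (scaled_diff p q i k)\<^sup>2)"
  unfolding power2_norm_vec by (simp add: user_scaled_norms_def norm_scaled_diff_row)

lemma JGlow_quadratic_form_le:
  assumes "p \<in> feasible" "q \<in> feasible"
  shows "scaled_diff_vec p q \<bullet> (JGlow H nz pm *v scaled_diff_vec p q)
    \<le> (p - q) \<bullet> (Gmap H nz p - Gmap H nz q)"
proof -
  have "scaled_diff_vec p q \<bullet> (JGlow H nz pm *v scaled_diff_vec p q)
    = (\<Sum>i\<in>UNIV. \<Sum>k\<in>UNIV. \<Sum>j\<in>UNIV.
         JGlow_blk H nz pm k $ i $ j * \<bar>scaled_diff p q i k\<bar> * \<bar>scaled_diff p q j k\<bar>)"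
    unfolding scaled_diff_vec_def by (rule JGlow_quadratic_form)
  also have "\<dots> \<le> (\<Sum>i\<in>UNIV. (p$i - q$i) \<bullet> (Gmap H nz p $ i - Gmap H nz q $ i))"
    by (intro sum_mono JGlow_blk_user_bound[OF assms])
  also have "\<dots> = (p - q) \<bullet> (Gmap H nz p - Gmap H nz q)"
    by (simp add: inner_vec_def)
  finally show ?thesis .
qed

lemma monotone_Gmap_if_psd_JGlow:
  "psd_mat (JGlow H nz pm) \<Longrightarrow> monotone_map_on feasible (Gmap H nz)"
  unfolding monotone_map_on_def psd_mat_def using JGlow_quadratic_form_le order_trans by blast

lemma strongly_monotone_Gmap_if_pd_JGlow:
  assumes "pd_mat (JGlow H nz pm)"
  shows "strongly_monotone_map_on feasible (Gmap H nz)"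
proof -
  obtain c where c: "c > 0" "\<And>x. c * (norm x)\<^sup>2 \<le> x \<bullet> (JGlow H nz pm *v x)"
    using pd_mat_quadratic_lower_bound[OF assms] by blast
  obtain m where m: "m > 0"
    "\<And>p q. p \<in> feasible \<Longrightarrow> q \<in> feasible \<Longrightarrow> m * (norm (p - q))\<^sup>2 \<le> (norm (scaled_diff_vec p q))\<^sup>2"
    using scaled_diff_lower_bound unfolding norm_scaled_diff_vec by blast
  have "c * m * (norm (p - q))\<^sup>2 \<le> (p - q) \<bullet> (Gmap H nz p - Gmap H nz q)"
    if "p \<in> feasible" "q \<in> feasible" for p q
  proof -
    have "c * m * (norm (p - q))\<^sup>2 \<le> c * (norm (scaled_diff_vec p q))\<^sup>2"
      using m(2)[OF that] c(1) by (simp add: mult.assoc)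
    also have "\<dots> \<le> (p - q) \<bullet> (Gmap H nz p - Gmap H nz q)"
      using c(2) JGlow_quadratic_form_le[OF that] by (rule order_trans)
    finally show ?thesis .
  qed
  then show ?thesis
    unfolding strongly_monotone_map_on_def using c(1) m(1) by (intro exI[of _ "c * m"]) auto
qed

lemma Upsilon_G_diag: "Upsilon_G H nz pm $ i $ i = 1"
  by (simp add: Upsilon_G_def)

lemma Upsilon_G_off_diag:
  assumes "j \<noteq> i"
  shows "Upsilon_G H nz pm $ i $ j \<le> JGlow_blk H nz pm k $ i $ j" "Upsilon_G H nz pm $ i $ j \<le> 0"
proof -
  define L where "L k = (cmod (H i j k))\<^sup>2 / (cmod (H j j k))\<^sup>2 * innr H nz pm i j k" for k
  have L_le: "L k \<le> Max (range L)" by (rule Max_ge) auto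
  have "0 \<le> L k"
    using sigma_pos pm_nonneg unfolding L_def innr_def
    by (intro mult_nonneg_nonneg divide_nonneg_nonneg add_nonneg_nonneg sum_nonneg) (auto intro: less_imp_le)
  moreover have "Upsilon_G H nz pm $ i $ j = - Max (range L)" "JGlow_blk H nz pm k $ i $ j = - L k"
    using assms by (simp_all add: Upsilon_G_def JGlow_blk_def L_def)
  ultimately show "Upsilon_G H nz pm $ i $ j \<le> JGlow_blk H nz pm k $ i $ j"
    "Upsilon_G H nz pm $ i $ j \<le> 0"
    using L_le by linarith+
qed

lemma Upsilon_G_user_bound:
  assumes "p \<in> feasible" "q \<in> feasible"
  defines "V \<equiv> user_scaled_norms p q"
  shows "V$i * (Upsilon_G H nz pm *v V)$i \<le> (p$i - q$i) \<bullet> (Gmap H nz p $ i - Gmap H nz q $ i)"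
proof -
  let ?a = "\<lambda>i k. \<bar>scaled_diff p q i k\<bar>"
  have "V$i * (Upsilon_G H nz pm *v V)$i = (\<Sum>j\<in>UNIV. Upsilon_G H nz pm $ i $ j * (V$i * V$j))"
    by (simp add: matrix_vector_mult_def sum_distrib_left mult_ac)
  also have "\<dots> \<le> (\<Sum>j\<in>UNIV. \<Sum>k\<in>UNIV. JGlow_blk H nz pm k $ i $ j * ?a i k * ?a j k)"
  proof (rule sum_mono)
    fix j
    have "V$i * V$j = norm (\<chi> k. ?a i k) * norm (\<chi> k. ?a j k)"
      by (simp add: V_def user_scaled_norms_def norm_eq_sqrt_inner inner_vec_def)
    also have "\<dots> \<ge> (\<Sum>k\<in>UNIV. ?a i k * ?a j k)"
      using norm_cauchy_schwarz[of "\<chi> k. ?a i k" "\<chi> k. ?a j k"] by (simp add: inner_vec_def)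
    finally have cauchy_schwarz: "(\<Sum>k\<in>UNIV. ?a i k * ?a j k) \<le> V$i * V$j" .
    show "Upsilon_G H nz pm $ i $ j * (V$i * V$j)
      \<le> (\<Sum>k\<in>UNIV. JGlow_blk H nz pm k $ i $ j * ?a i k * ?a j k)"
    proof (cases "j = i")
      case True
      then show ?thesis
        using norm_scaled_diff_row[of p q i]
        by (simp add: Upsilon_G_diag JGlow_blk_def V_def user_scaled_norms_def power2_eq_square)
    next
      case False
      have "Upsilon_G H nz pm $ i $ j * (V$i * V$j)
          \<le> Upsilon_G H nz pm $ i $ j * (\<Sum>k\<in>UNIV. ?a i k * ?a j k)"
        by (rule mult_left_mono_neg[OF cauchy_schwarz Upsilon_G_off_diag(2)[OF False]])
      also have "\<dots> \<le> (\<Sum>k\<in>UNIV. JGlow_blk H nz pm k $ i $ j * ?a i k * ?a j k)"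
        unfolding sum_distrib_left mult.assoc[symmetric]
        using Upsilon_G_off_diag(1)[OF False] by (intro sum_mono mult_right_mono) auto
      finally show ?thesis .
    qed
  qed
  also have "\<dots> = (\<Sum>k\<in>UNIV. \<Sum>j\<in>UNIV. JGlow_blk H nz pm k $ i $ j * ?a i k * ?a j k)"
    by (rule sum.swap)
  also have "\<dots> \<le> (p$i - q$i) \<bullet> (Gmap H nz p $ i - Gmap H nz q $ i)"
    by (rule JGlow_blk_user_bound[OF assms(1,2)])
  finally show ?thesis .
qed

lemma uniformly_P_Gmap_if_P_matrix_Upsilon:
  assumes "P_matrix (Upsilon_G H nz pm)"
  shows "uniformly_P_on feasible (Gmap H nz)"
proof -
  obtain c where c: "c > 0" "\<And>x. \<exists>i. c * (norm x)\<^sup>2 \<le> x$i * (Upsilon_G H nz pm *v x)$i"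
    using P_matrix_uniform_sign_non_reversal[OF assms] by blast
  obtain m where m: "m > 0" "\<And>p q. p \<in> feasible \<Longrightarrow> q \<in> feasible \<Longrightarrow>
      m * (norm (p - q))\<^sup>2 \<le> (norm (user_scaled_norms p q))\<^sup>2"
    using scaled_diff_lower_bound unfolding norm_user_scaled_norms by blast
  have "c * m * (norm (p - q))\<^sup>2 \<le> (MAX i. (p$i - q$i) \<bullet> (Gmap H nz p $ i - Gmap H nz q $ i))"
    if "p \<in> feasible" "q \<in> feasible" for p q
  proof -
    let ?V = "user_scaled_norms p q"
    obtain i where i: "c * (norm ?V)\<^sup>2 \<le> ?V$i * (Upsilon_G H nz pm *v ?V)$i"
      using c(2) by blast
    have "c * m * (norm (p - q))\<^sup>2 \<le> c * (norm ?V)\<^sup>2"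
      using m(2)[OF that] c(1) by (simp add: mult.assoc)
    also have "\<dots> \<le> (p$i - q$i) \<bullet> (Gmap H nz p $ i - Gmap H nz q $ i)"
      using i Upsilon_G_user_bound[OF that] by (rule order_trans)
    also have "\<dots> \<le> (MAX i. (p$i - q$i) \<bullet> (Gmap H nz p $ i - Gmap H nz q $ i))"
      by (rule Max_ge) auto
    finally show ?thesis .
  qed
  then show ?thesis
    unfolding uniformly_P_on_def using c(1) m(1) by (intro exI[of _ "c * m"]) auto
qed

lemma strongly_monotone_Gmap_if_pd_Upsilon:
  assumes "pd_mat (Upsilon_G H nz pm)"
  shows "strongly_monotone_map_on feasible (Gmap H nz)"
proof -
  obtain c where c: "c > 0" "\<And>x. c * (norm x)\<^sup>2 \<le> x \<bullet> (Upsilon_G H nz pm *v x)"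
    using pd_mat_quadratic_lower_bound[OF assms] by blast
  obtain m where m: "m > 0" "\<And>p q. p \<in> feasible \<Longrightarrow> q \<in> feasible \<Longrightarrow>
      m * (norm (p - q))\<^sup>2 \<le> (norm (user_scaled_norms p q))\<^sup>2"
    using scaled_diff_lower_bound unfolding norm_user_scaled_norms by blast
  have "c * m * (norm (p - q))\<^sup>2 \<le> (p - q) \<bullet> (Gmap H nz p - Gmap H nz q)"
    if "p \<in> feasible" "q \<in> feasible" for p q
  proof -
    let ?V = "user_scaled_norms p q"
    have "c * m * (norm (p - q))\<^sup>2 \<le> c * (norm ?V)\<^sup>2"
      using m(2)[OF that] c(1) by (simp add: mult.assoc)
    also have "\<dots> \<le> (\<Sum>i\<in>UNIV. ?V$i * (Upsilon_G H nz pm *v ?V)$i)"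
      using c(2)[of ?V] by (simp add: inner_vec_def)
    also have "\<dots> \<le> (\<Sum>i\<in>UNIV. (p$i - q$i) \<bullet> (Gmap H nz p $ i - Gmap H nz q $ i))"
      by (intro sum_mono Upsilon_G_user_bound[OF that])
    also have "\<dots> = (p - q) \<bullet> (Gmap H nz p - Gmap H nz q)"
      by (simp add: inner_vec_def)
    finally show ?thesis .
  qed
  then show ?thesis
    unfolding strongly_monotone_map_on_def using c(1) m(1) by (intro exI[of _ "c * m"]) auto
qed

lemma ex1_NE_if_VI_unique:
  assumes "\<And>p q. solves_VI feasible (Gmap H nz) p \<Longrightarrow> solves_VI feasible (Gmap H nz) q \<Longrightarrow> p = q"
  shows "\<exists>!p. is_NE H nz Pt pm w al p"
  using ex_solves_VI assms unfolding NE_iff_solves_VI by blast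

end

theorem mainTheorem15:
  fixes H :: "'i::finite \<Rightarrow> 'i \<Rightarrow> 'k::finite \<Rightarrow> complex"
    and nz :: "'i \<Rightarrow> 'k \<Rightarrow> real"
    and Pt :: "'i \<Rightarrow> real"
    and pm :: "'i \<Rightarrow> 'k \<Rightarrow> real"
    and w :: "'i \<Rightarrow> 'k \<Rightarrow> 'm::finite \<Rightarrow> real"
    and al :: "'i \<Rightarrow> 'm \<Rightarrow> real"
  assumes H_diag: "\<And>i k. H i i k \<noteq> 0"
    and sigma_pos: "\<And>i k. 0 < nz i k"
    and Pt_pos: "\<And>i. 0 < Pt i"
    and pm_nonneg: "\<And>i k. 0 \<le> pm i k"
    and w_nonneg: "\<And>i k l. 0 \<le> w i k l"
    and al_nonneg: "\<And>i l. 0 \<le> al i l"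
  shows
    "(\<forall>p. is_NE H nz Pt pm w al p \<longleftrightarrow> solves_VI (siso_set Pt pm w al) (Gmap H nz) p)
     \<and> {p. solves_VI (siso_set Pt pm w al) (Gmap H nz) p} \<noteq> {}
     \<and> compact {p. solves_VI (siso_set Pt pm w al) (Gmap H nz) p}
     \<and> (psd_mat (JGlow H nz pm) \<longrightarrow> monotone_map_on (siso_set Pt pm w al) (Gmap H nz))
     \<and> (pd_mat (JGlow H nz pm) \<longrightarrow> strongly_monotone_map_on (siso_set Pt pm w al) (Gmap H nz))
     \<and> (P_matrix (Upsilon_G H nz pm) \<longrightarrow>
          uniformly_P_on (siso_set Pt pm w al) (Gmap H nz) \<and> (\<exists>!p. is_NE H nz Pt pm w al p))
     \<and> (pd_mat (Upsilon_G H nz pm) \<longrightarrow>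
          strongly_monotone_map_on (siso_set Pt pm w al) (Gmap H nz) \<and> (\<exists>!p. is_NE H nz Pt pm w al p))"
proof -
  interpret siso_game H nz Pt pm w al
    using H_diag sigma_pos Pt_pos pm_nonneg al_nonneg by unfold_locales (auto intro: less_imp_le)
  have unique_if_uniformly_P: "uniformly_P_on feasible (Gmap H nz) \<Longrightarrow> \<exists>!p. is_NE H nz Pt pm w al p"
    by (intro ex1_NE_if_VI_unique solves_VI_uniformly_P_unique[where X = feasible_user])
      (simp_all add: feasible_iff[symmetric])
  have unique_if_strongly_monotone:
    "strongly_monotone_map_on feasible (Gmap H nz) \<Longrightarrow> \<exists>!p. is_NE H nz Pt pm w al p"
    by (intro ex1_NE_if_VI_unique solves_VI_strongly_monotone_unique)
  show ?thesis
    using NE_iff_solves_VI ex_solves_VI compact_solutions_VI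
      monotone_Gmap_if_psd_JGlow strongly_monotone_Gmap_if_pd_JGlow
      uniformly_P_Gmap_if_P_matrix_Upsilon strongly_monotone_Gmap_if_pd_Upsilon
      unique_if_uniformly_P unique_if_strongly_monotone
    by blast
qed

end
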